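(* Let $\mathbb{A}$ be a medial generic isospectral algebra of dimension $n$ over an algebraically closed subfield $\mathbb{K}$ of $\mathbb{C}$, let $\epsilon_n=e^{2\pi\sqrt{-1}/n}$, let $c$ be a nonzero idempotent and let $w_1\neq0$ satisfy $cw_1=\epsilon_nw_1$. Then every nonassociative monomial $w_1^{\alpha}$ in $w_1$ satisfies $w_1^{\alpha}=\epsilon_n^s\,w_1^{\deg w_1^\alpha}$ for some integer $0\le s\le n-1$ (the right side being a principal power), and for all $k,m\ge1$, $$w_1^kw_1^m=\epsilon_n^{-(k-1)(m-1)}\,w_1^{k+m}.$$
   Context: All algebras commutative, possibly nonassociative, finite-dimensional. Medial: $(xy)(zw)=(xz)(yw)$ identically. Isospectral: all nonzero idempotents $c$ have the same spectrum (multiset of eigenvalues of $L_c:x\mapsto cx$). Generic: the complexification has exactly $2^n$ idempotents (including $0$). Principal powers: $z^1=z$, $z^{k+1}=z\,z^k$. A nonassociative monomial in $z$ is an element of the commutative multiplicative groupoid generated by $z$; its degree is the number of occurrences of $z$ (e.g. $\deg z^2z^2=4$). *)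

theory Defs
  imports Complex_Main "HOL-Computational_Algebra.Polynomial" "Jordan_Normal_Form.Char_Poly"
begin

definition alg_closed_subfield :: "complex set \<Rightarrow> bool" where
  "alg_closed_subfield K \<longleftrightarrow>
     0 \<in> K \<and> 1 \<in> K \<and>
     (\<forall>x\<in>K. \<forall>y\<in>K. x + y \<in> K \<and> x - y \<in> K \<and> x * y \<in> K) \<and>
     (\<forall>x\<in>K. x \<noteq> 0 \<longrightarrow> inverse x \<in> K) \<and>
     (\<forall>p :: complex poly. (\<forall>i. coeff p i \<in> K) \<and> degree p \<ge> 1 \<longrightarrow>
        (\<exists>z\<in>K. poly p z = 0))"

text \<open>The product is given by structure
  constants gam i j k (coefficient of e_k in e_i e_j).\<close>
definition vec_space :: "complex set \<Rightarrow> nat \<Rightarrow> (nat \<Rightarrow> complex) set" where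
  "vec_space K n = {x. (\<forall>i<n. x i \<in> K) \<and> (\<forall>i\<ge>n. x i = 0)}"

definition amult :: "(nat \<Rightarrow> nat \<Rightarrow> nat \<Rightarrow> complex) \<Rightarrow> nat \<Rightarrow>
    (nat \<Rightarrow> complex) \<Rightarrow> (nat \<Rightarrow> complex) \<Rightarrow> (nat \<Rightarrow> complex)" where
  "amult gam n x y = (\<lambda>k. if k < n then (\<Sum>i<n. \<Sum>j<n. gam i j k * x i * y j) else 0)"

definition vscale :: "complex \<Rightarrow> (nat \<Rightarrow> complex) \<Rightarrow> (nat \<Rightarrow> complex)" where
  "vscale a x = (\<lambda>i. a * x i)"

definition Lmat :: "(nat \<Rightarrow> nat \<Rightarrow> nat \<Rightarrow> complex) \<Rightarrow> nat \<Rightarrow> (nat \<Rightarrow> complex) \<Rightarrow> complex mat" where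
  "Lmat gam n c = mat n n (\<lambda>(k, j). \<Sum>i<n. gam i j k * c i)"

definition medial :: "complex set \<Rightarrow> (nat \<Rightarrow> nat \<Rightarrow> nat \<Rightarrow> complex) \<Rightarrow> nat \<Rightarrow> bool" where
  "medial K gam n \<longleftrightarrow> (\<forall>x\<in>vec_space K n. \<forall>y\<in>vec_space K n. \<forall>z\<in>vec_space K n. \<forall>w\<in>vec_space K n.
      amult gam n (amult gam n x y) (amult gam n z w) = amult gam n (amult gam n x z) (amult gam n y w))"

text \<open>Isospectral: all nonzero idempotents have the same spectrum (multiset of eigenvalues
  of L_c with algebraic multiplicities), i.e. the same characteristic polynomial.\<close>
definition isospectral :: "complex set \<Rightarrow> (nat \<Rightarrow> nat \<Rightarrow> nat \<Rightarrow> complex) \<Rightarrow> nat \<Rightarrow> bool" where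
  "isospectral K gam n \<longleftrightarrow> (\<forall>c\<in>vec_space K n. \<forall>c'\<in>vec_space K n.
      c \<noteq> (\<lambda>_. 0) \<and> amult gam n c c = c \<and> c' \<noteq> (\<lambda>_. 0) \<and> amult gam n c' c' = c' \<longrightarrow>
      char_poly (Lmat gam n c) = char_poly (Lmat gam n c'))"

text \<open>Generic: the complexification has exactly 2^n idempotents (including 0).\<close>
definition generic :: "(nat \<Rightarrow> nat \<Rightarrow> nat \<Rightarrow> complex) \<Rightarrow> nat \<Rightarrow> bool" where
  "generic gam n \<longleftrightarrow> card {x \<in> vec_space UNIV n. amult gam n x x = x} = 2 ^ n"

datatype namon = Var | Prod namon namon

fun mon_eval :: "('v \<Rightarrow> 'v \<Rightarrow> 'v) \<Rightarrow> 'v \<Rightarrow> namon \<Rightarrow> 'v" where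
  "mon_eval m z Var = z"
| "mon_eval m z (Prod a b) = m (mon_eval m z a) (mon_eval m z b)"

fun mon_deg :: "namon \<Rightarrow> nat" where
  "mon_deg Var = 1"
| "mon_deg (Prod a b) = mon_deg a + mon_deg b"

text \<open>Principal powers: ppow m z k = z^k for k >= 1 (z^1 = z, z^(k+1) = z z^k);
  the value at k = 0 is a junk value (z).\<close>
fun ppow :: "('v \<Rightarrow> 'v \<Rightarrow> 'v) \<Rightarrow> 'v \<Rightarrow> nat \<Rightarrow> 'v" where
  "ppow m z 0 = z"
| "ppow m z (Suc 0) = z"
| "ppow m z (Suc (Suc k)) = m z (ppow m z (Suc k))"

end

theory Submission
  imports Defs
begin

text \<open>Mediality with the idempotent c gives
  c(w w^k) = (cc)(w w^k) = (cw)(c w^k), so the principal power w^k is an eigenvector of L_c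
  for the eigenvalue \<mu>^k. Mediality applied to (c w^a)(w w^m) = (cw)(w^a w^m) then gives
  \<mu>^a w^a w^(m+1) = \<mu> w (w^a w^m), a recursion in m solved by
  w^a w^m = \<mu>^(-(a-1)(m-1)) w^(a+m). By induction on monomials, every monomial is an
  integer power of \<mu> times the principal power of its degree; when \<mu> is an n-th root of
  unity that integer power reduces to \<mu>^s with s < n.\<close>

lemma ppow_Suc: "k \<ge> 1 \<Longrightarrow> ppow M z (Suc k) = M z (ppow M z k)"
  by (cases k) auto

lemma ppow_closed:
  assumes "\<And>x y. x \<in> V \<Longrightarrow> y \<in> V \<Longrightarrow> M x y \<in> V" and "z \<in> V"
  shows "ppow M z k \<in> V"
proof (induction k)
  case (Suc k)
  then show ?case using assms by (cases k) auto
qed (use assms in simp)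

lemma mon_deg_ge_1: "mon_deg \<alpha> \<ge> 1"
  by (induction \<alpha>) auto

lemma power_int_root_of_unity:
  fixes e :: "'a :: field"
  assumes "n > 0" and "e ^ n = 1"
  obtains s where "s < n" and "e powi z = e ^ s"
proof
  have "e \<noteq> 0" using assms by (metis power_0_left less_not_refl zero_neq_one)
  have "e powi z = e powi (int n * (z div int n)) * e powi (z mod int n)"
    using \<open>e \<noteq> 0\<close> by (simp flip: power_int_add)
  also have "e powi (int n * (z div int n)) = 1"
    using assms by (simp add: power_int_mult)
  finally show "e powi z = e ^ nat (z mod int n)"
    using assms(1) by (simp flip: power_int_of_nat)
  show "nat (z mod int n) < n"
    using assms(1) by (simp add: nat_less_iff)
qed

locale comm_medial_magma =
  fixes V :: "'v set" and M :: "'v \<Rightarrow> 'v \<Rightarrow> 'v" and smul :: "'a :: field \<Rightarrow> 'v \<Rightarrow> 'v"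
  assumes mult_closed: "x \<in> V \<Longrightarrow> y \<in> V \<Longrightarrow> M x y \<in> V"
    and mult_commute: "M x y = M y x"
    and medial: "x \<in> V \<Longrightarrow> y \<in> V \<Longrightarrow> z \<in> V \<Longrightarrow> w \<in> V \<Longrightarrow>
      M (M x y) (M z w) = M (M x z) (M y w)"
    and smul_smul: "smul a (smul b x) = smul (a * b) x"
    and smul_one: "smul 1 x = x"
    and mult_smul_left: "M (smul a x) y = smul a (M x y)"
begin

lemma mult_smul_right: "M x (smul a y) = smul a (M x y)"
  by (metis mult_commute mult_smul_left)

lemma smul_cancel: "a \<noteq> 0 \<Longrightarrow> smul a x = smul a y \<Longrightarrow> x = y"
  by (metis smul_smul smul_one field_class.field_inverse)

context
  fixes c w :: 'v and \<mu> :: 'a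
  assumes c: "c \<in> V" "M c c = c"
    and w: "w \<in> V" "M c w = smul \<mu> w"
begin

lemma idempotent_eigen_ppow:
  assumes "k \<ge> 1"
  shows "M c (ppow M w k) = smul (\<mu> ^ k) (ppow M w k)"
  using assms
proof (induction k rule: dec_induct)
  case base
  then show ?case using w(2) by simp
next
  case (step k)
  have "M c (ppow M w (Suc k)) = M (M c c) (M w (ppow M w k))"
    using c(2) ppow_Suc[OF step.hyps(1), of M w] by simp
  also have "\<dots> = M (M c w) (M c (ppow M w k))"
    by (rule medial[OF c(1) c(1) w(1) ppow_closed[OF mult_closed w(1)]])
  also have "\<dots> = smul (\<mu> ^ Suc k) (ppow M w (Suc k))"
    using w(2) step.IH ppow_Suc[OF step.hyps(1), of M w]
    by (simp add: mult_smul_left mult_smul_right smul_smul mult.commute)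
  finally show ?case .
qed

lemma ppow_mult_ppow:
  assumes "\<mu> \<noteq> 0" and "a \<ge> 1" and "m \<ge> 1"
  shows "M (ppow M w a) (ppow M w m) =
    smul (\<mu> powi (- (int (a - 1) * int (m - 1)))) (ppow M w (a + m))"
  using assms(3)
proof (induction m rule: dec_induct)
  case base
  show ?case using ppow_Suc[OF assms(2), of M w] by (simp add: mult_commute smul_one)
next
  case (step m)
  let ?P = "ppow M w"
  define l where "l = \<mu> powi (- (int (a - 1) * int (m - 1)))"
  define l' where "l' = \<mu> powi (- (int (a - 1) * int m))"
  have exponent: "\<mu> ^ a * l' = \<mu> * l"
  proof -
    have "int a + - (int (a - 1) * int m) = 1 + - (int (a - 1) * int (m - 1))"
      using assms(2) step.hyps by (simp add: of_nat_diff algebra_simps)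
    then show ?thesis
      unfolding l_def l'_def using assms(1)
      by (metis power_int_add power_int_of_nat power_int_1_right)
  qed
  have "smul (\<mu> ^ a) (M (?P a) (?P (Suc m))) = M (M c (?P a)) (M w (?P m))"
    using idempotent_eigen_ppow[OF assms(2)] ppow_Suc[OF step.hyps(1), of M w]
    by (simp add: mult_smul_left)
  also have "\<dots> = M (M c w) (M (?P a) (?P m))"
    by (rule medial[OF c(1) ppow_closed[OF mult_closed w(1)] w(1) ppow_closed[OF mult_closed w(1)]])
  also have "\<dots> = smul (\<mu> * l) (?P (Suc (a + m)))"
    using w(2) step.IH ppow_Suc[of "a + m" M w] assms(2)
    by (simp add: l_def mult_smul_left mult_smul_right smul_smul mult.commute)
  also have "\<dots> = smul (\<mu> ^ a) (smul l' (?P (a + Suc m)))"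
    by (simp add: smul_smul exponent)
  finally have "M (?P a) (?P (Suc m)) = smul l' (?P (a + Suc m))"
    using smul_cancel assms(1) by (meson power_not_zero)
  then show ?case by (simp add: l'_def)
qed

lemma mon_eval_eq_smul_ppow:
  assumes "\<mu> \<noteq> 0"
  shows "\<exists>z::int. mon_eval M w \<alpha> = smul (\<mu> powi z) (ppow M w (mon_deg \<alpha>))"
proof (induction \<alpha>)
  case Var
  then show ?case by (intro exI[of _ 0]) (simp add: smul_one)
next
  case (Prod \<alpha> \<beta>)
  then obtain z z' where z: "mon_eval M w \<alpha> = smul (\<mu> powi z) (ppow M w (mon_deg \<alpha>))"
    and z': "mon_eval M w \<beta> = smul (\<mu> powi z') (ppow M w (mon_deg \<beta>))"
    by blast
  define t where "t = - (int (mon_deg \<alpha> - 1) * int (mon_deg \<beta> - 1))"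
  have product: "M (ppow M w (mon_deg \<alpha>)) (ppow M w (mon_deg \<beta>)) =
      smul (\<mu> powi t) (ppow M w (mon_deg (Prod \<alpha> \<beta>)))"
    unfolding t_def using ppow_mult_ppow[OF assms mon_deg_ge_1 mon_deg_ge_1] by simp
  have "mon_eval M w (Prod \<alpha> \<beta>) =
      smul (\<mu> powi z * \<mu> powi z') (M (ppow M w (mon_deg \<alpha>)) (ppow M w (mon_deg \<beta>)))"
    using z z' by (simp add: mult_smul_left mult_smul_right smul_smul mult.commute)
  also have "\<dots> = smul (\<mu> powi (z + z' + t)) (ppow M w (mon_deg (Prod \<alpha> \<beta>)))"
    using product assms by (simp add: power_int_add smul_smul)
  finally show ?case by blast
qed

end

end

lemma vec_space_eq_zero: "x \<in> vec_space K 0 \<Longrightarrow> x = (\<lambda>_. 0)"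
  unfolding vec_space_def by auto

lemma sum_in_subfield:
  assumes "alg_closed_subfield K" and "finite A" and "\<forall>i\<in>A. f i \<in> K"
  shows "sum f A \<in> K"
  using assms(2,3) by (induction A rule: finite_induct)
    (use assms(1) in \<open>auto simp: alg_closed_subfield_def\<close>)

lemma amult_closed:
  assumes K: "alg_closed_subfield K" and gamK: "\<forall>i<n. \<forall>j<n. \<forall>k<n. gam i j k \<in> K"
    and x: "x \<in> vec_space K n" and y: "y \<in> vec_space K n"
  shows "amult gam n x y \<in> vec_space K n"
proof -
  have "(\<Sum>i<n. \<Sum>j<n. gam i j k * x i * y j) \<in> K" if "k < n" for k
    using K gamK x y that
    by (intro sum_in_subfield ballI) (auto simp: alg_closed_subfield_def vec_space_def)
  then show ?thesis unfolding vec_space_def amult_def by auto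
qed

lemma amult_commute:
  assumes "\<forall>i<n. \<forall>j<n. \<forall>k<n. gam i j k = gam j i k"
  shows "amult gam n x y = amult gam n y x"
proof -
  have "(\<Sum>i<n. \<Sum>j<n. gam i j k * x i * y j) = (\<Sum>i<n. \<Sum>j<n. gam i j k * y i * x j)"
    if "k < n" for k
    using assms that by (subst sum.swap) (auto intro!: sum.cong simp: algebra_simps)
  then show ?thesis unfolding amult_def by auto
qed

lemma amult_vscale_left: "amult gam n (vscale a x) y = vscale a (amult gam n x y)"
  unfolding amult_def vscale_def by (rule ext) (simp add: sum_distrib_left algebra_simps)

lemma comm_medial_magma_amult:
  assumes "alg_closed_subfield K" and "\<forall>i<n. \<forall>j<n. \<forall>k<n. gam i j k \<in> K"
    and "\<forall>i<n. \<forall>j<n. \<forall>k<n. gam i j k = gam j i k" and "medial K gam n"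
  shows "comm_medial_magma (vec_space K n) (amult gam n) vscale"
proof
  show "amult gam n x y = amult gam n y x" for x y
    using assms(3) by (rule amult_commute)
  show "amult gam n (vscale a x) y = vscale a (amult gam n x y)" for a x y
    by (rule amult_vscale_left)
qed (use assms amult_closed in \<open>auto simp: medial_def vscale_def\<close>)

theorem proposition6p4:
  fixes K :: "complex set" and n :: nat and gam :: "nat \<Rightarrow> nat \<Rightarrow> nat \<Rightarrow> complex"
    and c w1 :: "nat \<Rightarrow> complex"
  assumes K: "alg_closed_subfield K"
    and gamK: "\<forall>i<n. \<forall>j<n. \<forall>k<n. gam i j k \<in> K"
    and comm: "\<forall>i<n. \<forall>j<n. \<forall>k<n. gam i j k = gam j i k"
    and med: "medial K gam n"
    and gen: "generic gam n"
    and iso: "isospectral K gam n"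
    and c: "c \<in> vec_space K n" "c \<noteq> (\<lambda>_. 0)" "amult gam n c c = c"
    and w1: "w1 \<in> vec_space K n" "w1 \<noteq> (\<lambda>_. 0)"
    and eig: "amult gam n c w1 = vscale (cis (2 * pi / n)) w1"
  shows "(\<forall>\<alpha>. \<exists>s::nat. s \<le> n - 1 \<and>
            mon_eval (amult gam n) w1 \<alpha> =
              vscale (cis (2 * pi / n) ^ s) (ppow (amult gam n) w1 (mon_deg \<alpha>)))
       \<and> (\<forall>k m. k \<ge> 1 \<longrightarrow> m \<ge> 1 \<longrightarrow>
            amult gam n (ppow (amult gam n) w1 k) (ppow (amult gam n) w1 m) =
              vscale (cis (2 * pi / n) powi (- (int (k - 1) * int (m - 1))))
                (ppow (amult gam n) w1 (k + m)))"
proof -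
  interpret comm_medial_magma "vec_space K n" "amult gam n" vscale
    using comm_medial_magma_amult[OF K gamK comm med] .
  have "n > 0" using w1 vec_space_eq_zero by (metis gr0I)
  then have root: "cis (2 * pi / n) ^ n = 1" by (simp add: DeMoivre)
  have "\<exists>s\<le>n - 1. mon_eval (amult gam n) w1 \<alpha> =
      vscale (cis (2 * pi / n) ^ s) (ppow (amult gam n) w1 (mon_deg \<alpha>))" for \<alpha>
  proof -
    obtain z where "mon_eval (amult gam n) w1 \<alpha> =
        vscale (cis (2 * pi / n) powi z) (ppow (amult gam n) w1 (mon_deg \<alpha>))"
      using mon_eval_eq_smul_ppow[OF c(1,3) w1(1) eig] by auto
    moreover obtain s where "s < n" and "cis (2 * pi / n) powi z = cis (2 * pi / n) ^ s"
      using power_int_root_of_unity[OF \<open>n > 0\<close> root] .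
    moreover have "s \<le> n - 1" using \<open>s < n\<close> by simp
    ultimately show ?thesis by auto
  qed
  then show ?thesis
    using ppow_mult_ppow[OF c(1,3) w1(1) eig] by auto
qed

end
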